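(* Let $F(x)=x^{-1}$ on $GF(2^m)$ (i.e. $F(x)=x^{2^m-2}$, $F(0)=0$) and $S=STS(\mathcal H^n)$. If $m$ is odd, then at every nonzero point $a$ the self-embedding $S\cup F(S)$ has exactly $(2^m-2)/6$ rotation lines, each with $6$ points. If $m$ is even, then at every nonzero point there are exactly $(2^m-4)/6$ rotation lines with $6$ points each and one rotation line with $2$ points.
   Context: $n=2^m-1$. $S=STS(\mathcal H^n)$ is the set of 3-subsets $\{a,b,c\}$ of nonzero elements of $GF(2^m)$ with $a+b+c=0$; $F(S)=\{\{F(a),F(b),F(c)\}:\{a,b,c\}\in S\}$. For nonzero $a$, let $P_a=GF(2^m)\setminus\{0,a\}$, $s_a(y)=a+y$ and $\psi_a(y)=F(F^{-1}(a)+F^{-1}(y))$. The rotation lines at $a$ are the orbits on $P_a$ of the group generated by the involutions $s_a,\psi_a$; the number of points of a rotation line is the size of the orbit. *)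

theory Defs
  imports Main
begin

text \<open>GF(2^m) is modelled by an arbitrary finite field type of cardinality 2^m
  (all such fields are isomorphic). F is a permutation of the field with inverse Finv.\<close>

definition P_pts :: "'a::field \<Rightarrow> 'a set" where
  "P_pts a = UNIV - {0, a}"

definition s_map :: "'a::field \<Rightarrow> 'a \<Rightarrow> 'a" where
  "s_map a y = a + y"

definition psi_map :: "('a::field \<Rightarrow> 'a) \<Rightarrow> ('a \<Rightarrow> 'a) \<Rightarrow> 'a \<Rightarrow> 'a \<Rightarrow> 'a" where
  "psi_map F Finv a y = F (Finv a + Finv y)"

text \<open>One generator step on P_a (s_a or psi_a). Since both are involutions, the
  orbit of y under the group they generate is the set reachable by finitely many steps.\<close>
definition rot_step :: "('a::field \<Rightarrow> 'a) \<Rightarrow> ('a \<Rightarrow> 'a) \<Rightarrow> 'a \<Rightarrow> ('a \<times> 'a) set" where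
  "rot_step F Finv a = {(y, z). y \<in> P_pts a \<and> (z = s_map a y \<or> z = psi_map F Finv a y)}"

definition rot_orbit :: "('a::field \<Rightarrow> 'a) \<Rightarrow> ('a \<Rightarrow> 'a) \<Rightarrow> 'a \<Rightarrow> 'a \<Rightarrow> 'a set" where
  "rot_orbit F Finv a y = {z. (y, z) \<in> (rot_step F Finv a)\<^sup>*}"

definition rotation_lines :: "('a::field \<Rightarrow> 'a) \<Rightarrow> ('a \<Rightarrow> 'a) \<Rightarrow> 'a \<Rightarrow> 'a set set" where
  "rotation_lines F Finv a = rot_orbit F Finv a ` P_pts a"

end

theory Submission
  imports Defs "HOL-Number_Theory.Residues"
begin

text \<open>In characteristic 2 we have \<open>\<psi>\<^sub>a(y) = a y / (a + y)\<close>. Writing \<open>y = a t\<close>, the maps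
  \<open>s\<^sub>a\<close> and \<open>\<psi>\<^sub>a\<close> become \<open>t \<mapsto> 1 + t\<close> and \<open>t \<mapsto> t / (1 + t)\<close>, which generate the anharmonic
  group \<open>{t, 1+t, t/(1+t), 1/(1+t), (1+t)/t, 1/t} \<cong> S\<^sub>3\<close>. Hence every rotation line has 6 points,
  except that a point with \<open>t\<^sup>2 + t + 1 = 0\<close> has \<open>\<psi>\<^sub>a(y) = s\<^sub>a(y)\<close>; the two roots form a single
  line with 2 points. Such a root exists iff \<open>3\<close> divides \<open>2\<^sup>m - 1\<close>, and instead of deciding this
  field-theoretically we read the parity of \<open>m\<close> off the count \<open>2\<^sup>m - 2 = 6k\<close> or \<open>2\<^sup>m - 2 = 6k + 2\<close>.\<close>

lemma char_two_if_card_power_of_two: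
  assumes "card (UNIV :: 'a::{field,finite} set) = 2 ^ m"
  shows "(1::'a) + 1 = 0"
proof -
  have dvd: "CHAR('a) dvd 2 ^ m"
    using CHAR_dvd_CARD[where 'a='a] assms by simp
  have prime: "prime CHAR('a)"
    by (rule prime_CHAR_semidom) (simp add: finite_imp_CHAR_pos)
  have "CHAR('a) = 2"
    using prime_dvd_power[OF prime dvd] prime by (simp add: primes_dvd_imp_eq)
  then have "of_nat 2 = (0::'a)"
    using of_nat_eq_0_iff_char_dvd[of 2, where 'a='a] by simp
  then show ?thesis by simp
qed

lemma power_two_mod_three: "(2::nat) ^ m mod 3 = (if even m then 1 else 2)"
proof (induction m)
  case (Suc m)
  have "(2::nat) ^ Suc m mod 3 = 2 * (2 ^ m mod 3) mod 3"
    by (simp add: mod_mult_right_eq)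
  with Suc show ?case by auto
qed simp

lemma rotation_lines_eq_quotient:
  "rotation_lines F Finv a = P_pts a // (rot_step F Finv a)\<^sup>*"
  by (auto simp: rotation_lines_def rot_orbit_def quotient_def)

lemma sum_card_quotient_rtrancl:
  assumes "finite A" "sym r" "r `` A \<subseteq> A"
  shows "(\<Sum>X \<in> A // r\<^sup>*. card X) = card A"
proof -
  have equiv: "equiv UNIV (r\<^sup>*)"
    by (simp add: equiv_def refl_rtrancl trans_rtrancl sym_rtrancl \<open>sym r\<close>)
  have "A // r\<^sup>* \<subseteq> UNIV // r\<^sup>*"
    by (auto simp: quotient_def)
  then have "pairwise disjnt (A // r\<^sup>*)"
    using quotient_disj[OF equiv] by (auto simp: pairwise_def disjnt_def)
  moreover have union: "\<Union> (A // r\<^sup>*) = A"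
    using Image_closed_trancl[OF assms(3)] by (auto simp: quotient_def)
  moreover have "X \<in> A // r\<^sup>* \<Longrightarrow> finite X" for X
    using union \<open>finite A\<close> by (metis Union_upper finite_subset)
  ultimately show ?thesis
    using card_Union_disjoint by fastforce
qed

locale char2_rotation =
  fixes a :: "'a::field"
  assumes one_plus_one: "1 + 1 = (0::'a)"
    and a_nonzero: "a \<noteq> 0"
begin

abbreviation s\<^sub>a :: "'a \<Rightarrow> 'a" where "s\<^sub>a \<equiv> s_map a"
abbreviation \<psi>\<^sub>a :: "'a \<Rightarrow> 'a" where "\<psi>\<^sub>a \<equiv> psi_map inverse inverse a"

lemma add_self: "x + x = (0::'a)"
  using mult_2[of x] one_plus_one by simp

lemma numeral_Bit0_eq_zero: "numeral (Num.Bit0 n) = (0::'a)"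
  by (simp only: numeral_Bit0 add_self)

lemma add_self_left: "x + (x + y) = (y::'a)"
  by (simp add: add.assoc[symmetric] add_self)

lemma add_eq_0_iff_eq: "x + y = (0::'a) \<longleftrightarrow> x = y"
  by (metis add_self add_diff_cancel_right')

lemma P_pts_iff: "y \<in> P_pts a \<longleftrightarrow> y \<noteq> 0 \<and> y \<noteq> a"
  by (auto simp: P_pts_def)

lemma add_nonzero_if_P: "y \<in> P_pts a \<Longrightarrow> a + y \<noteq> 0"
  by (auto simp: P_pts_iff add_eq_0_iff_eq)

lemma s_involution: "s\<^sub>a (s\<^sub>a y) = y"
  by (simp add: s_map_def add_self_left)

lemma s_in_P: "y \<in> P_pts a \<Longrightarrow> s\<^sub>a y \<in> P_pts a"
  using a_nonzero by (auto simp: P_pts_iff s_map_def add_eq_0_iff_eq)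

lemma psi_eq: "y \<in> P_pts a \<Longrightarrow> \<psi>\<^sub>a y = a * y / (a + y)"
  using a_nonzero add_nonzero_if_P[of y] by (auto simp: psi_map_def P_pts_iff field_simps)

lemma psi_in_P: "y \<in> P_pts a \<Longrightarrow> \<psi>\<^sub>a y \<in> P_pts a"
  using a_nonzero add_nonzero_if_P[of y] by (auto simp: psi_eq P_pts_iff field_simps)

lemma psi_involution: "y \<in> P_pts a \<Longrightarrow> \<psi>\<^sub>a (\<psi>\<^sub>a y) = y"
  using psi_in_P by (simp add: psi_map_def add_self_left P_pts_iff)

lemma add_mult_div_add: "a + y \<noteq> 0 \<Longrightarrow> a + a * y / (a + y) = a * a / (a + y)"
  by (simp add: field_simps add_self_left numeral_Bit0_eq_zero)

lemma add_mult_add_div: "y \<noteq> 0 \<Longrightarrow> a + a * (a + y) / y = a * a / y"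
  by (simp add: field_simps add_self_left numeral_Bit0_eq_zero)

lemma psi_s_eq: "y \<in> P_pts a \<Longrightarrow> \<psi>\<^sub>a (s\<^sub>a y) = a * (a + y) / y"
  using psi_eq[OF s_in_P] by (simp add: s_map_def add_self_left)

lemma s_psi_eq: "y \<in> P_pts a \<Longrightarrow> s\<^sub>a (\<psi>\<^sub>a y) = a * a / (a + y)"
  using add_nonzero_if_P[of y] by (simp add: psi_eq s_map_def add_mult_div_add)

lemma s_psi_s_eq: "y \<in> P_pts a \<Longrightarrow> s\<^sub>a (\<psi>\<^sub>a (s\<^sub>a y)) = a * a / y"
  by (simp add: psi_s_eq) (simp add: s_map_def P_pts_iff add_mult_add_div)

lemma braid: assumes y: "y \<in> P_pts a"
  shows "\<psi>\<^sub>a (s\<^sub>a (\<psi>\<^sub>a y)) = s\<^sub>a (\<psi>\<^sub>a (s\<^sub>a y))"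
proof -
  have ay: "a + y \<noteq> 0" "y \<noteq> 0"
    using add_nonzero_if_P[OF y] y by (auto simp: P_pts_iff)
  have "a + a * a / (a + y) = a * y / (a + y)"
    using add_mult_div_add[OF ay(1)] add_self_left by metis
  then have "\<psi>\<^sub>a (s\<^sub>a (\<psi>\<^sub>a y)) = a * (a * a / (a + y)) / (a * y / (a + y))"
    using psi_eq[OF s_in_P[OF psi_in_P[OF y]]] s_psi_eq[OF y] by simp
  also have "\<dots> = a * a / y"
    using ay a_nonzero by (simp add: divide_simps)
  finally show ?thesis
    using s_psi_s_eq[OF y] by simp
qed

definition hexagon :: "'a \<Rightarrow> 'a set" where
  "hexagon y = {y, s\<^sub>a y, \<psi>\<^sub>a y, s\<^sub>a (\<psi>\<^sub>a y), \<psi>\<^sub>a (s\<^sub>a y), s\<^sub>a (\<psi>\<^sub>a (s\<^sub>a y))}"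

lemma hexagon_eq:
  assumes y: "y \<in> P_pts a"
  shows "hexagon y = {y, a + y, a * y / (a + y), a * a / (a + y), a * (a + y) / y, a * a / y}"
  unfolding hexagon_def \<comment> \<open>\<open>simp\<close> would rewrite the inner \<open>\<psi>\<^sub>a y\<close> before the composite equations apply\<close>
  by (subst s_psi_s_eq[OF y], subst psi_s_eq[OF y], subst s_psi_eq[OF y], subst psi_eq[OF y])
    (simp add: s_map_def)

lemma hexagon_closed:
  assumes y: "y \<in> P_pts a" and z: "z \<in> hexagon y"
  shows "s\<^sub>a z \<in> hexagon y" "\<psi>\<^sub>a z \<in> hexagon y"
proof -
  have "\<psi>\<^sub>a (s\<^sub>a (\<psi>\<^sub>a (s\<^sub>a y))) = s\<^sub>a (\<psi>\<^sub>a y)"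
    using braid[OF s_in_P[OF y]] by (simp add: s_involution)
  then show "s\<^sub>a z \<in> hexagon y" "\<psi>\<^sub>a z \<in> hexagon y"
    using z braid[OF y] psi_involution[OF y] psi_involution[OF s_in_P[OF y]]
    by (auto simp: hexagon_def s_involution)
qed

lemma rot_step_iff: "(y, z) \<in> rot_step inverse inverse a \<longleftrightarrow> y \<in> P_pts a \<and> (z = s\<^sub>a y \<or> z = \<psi>\<^sub>a y)"
  by (simp add: rot_step_def)

lemma sym_rot_step: "sym (rot_step inverse inverse a)"
  unfolding sym_def rot_step_iff using s_in_P psi_in_P psi_involution s_involution by metis

lemma rot_step_Image_P: "rot_step inverse inverse a `` P_pts a \<subseteq> P_pts a"
  by (auto simp: rot_step_iff s_in_P psi_in_P)

lemma rot_orbit_eq_hexagon: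
  assumes y: "y \<in> P_pts a"
  shows "rot_orbit inverse inverse a y = hexagon y"
proof
  show "rot_orbit inverse inverse a y \<subseteq> hexagon y"
  proof
    fix z assume "z \<in> rot_orbit inverse inverse a y"
    then have "(y, z) \<in> (rot_step inverse inverse a)\<^sup>*"
      by (simp add: rot_orbit_def)
    then show "z \<in> hexagon y"
    proof (induction rule: rtrancl_induct)
      case base
      show ?case by (simp add: hexagon_def)
    next
      case (step w z)
      then show ?case using hexagon_closed[OF y] by (auto simp: rot_step_iff)
    qed
  qed
next
  let ?r = "rot_step inverse inverse a"
  have steps: "(y, x) \<in> ?r\<^sup>* \<Longrightarrow> x \<in> P_pts a \<Longrightarrow> (y, s\<^sub>a x) \<in> ?r\<^sup>* \<and> (y, \<psi>\<^sub>a x) \<in> ?r\<^sup>*" for x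
    by (auto intro: rtrancl_into_rtrancl simp: rot_step_iff)
  show "hexagon y \<subseteq> rot_orbit inverse inverse a y"
    using steps[OF _ y] steps[OF _ s_in_P[OF y]] steps[OF _ psi_in_P[OF y]]
      steps[OF _ psi_in_P[OF s_in_P[OF y]]]
    by (auto simp: hexagon_def rot_orbit_def)
qed

lemma card_hexagon_if_not_root:
  assumes y: "y \<in> P_pts a" and not_root: "y * y + a * y + a * a \<noteq> 0"
  shows "card (hexagon y) = 6"
proof -
  have ne_if_sum: "u \<noteq> v" if "u + v = c" "c \<noteq> 0" for u v c :: 'a
    using that add_self by auto
  have y': "y \<noteq> 0" "y \<noteq> a" "a + y \<noteq> 0"
    using y add_nonzero_if_P[OF y] by (auto simp: P_pts_iff)
  have "(a + y) * (a + y) = y * y + a * a + 2 * (a * y)"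
    by (simp add: algebra_simps)
  then have "y * y + a * a = (a + y) * (a + y)"
    by (simp add: numeral_Bit0_eq_zero)
  then have "y * y \<noteq> a * a"
    by (rule ne_if_sum) (simp add: y'(3))
  moreover have "a * y + y * y \<noteq> a * a" "y * y \<noteq> a * a + a * y" "a * a + y * y \<noteq> a * y"
    by (rule ne_if_sum[OF _ not_root], simp add: algebra_simps)+
  moreover have "a * (y * y) \<noteq> a * (a * a) + a * (a * y)" "a * (a * y) \<noteq> a * (a * a) + a * (y * y)"
    by (rule ne_if_sum[where c = "a * (y * y + a * y + a * a)"], simp add: algebra_simps,
        simp add: a_nonzero not_root)+
  \<comment> \<open>after clearing denominators, the 15 inequalities reduce to the six above and \<open>a, y, a + y \<noteq> 0\<close>\<close>
  ultimately have "distinct [y, a + y, a * y / (a + y), a * a / (a + y), a * (a + y) / y, a * a / y]"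
    using y' a_nonzero numeral_Bit0_eq_zero by (simp add: field_simps)
  then show ?thesis
    using distinct_card by (fastforce simp: hexagon_eq[OF y])
qed

lemma root_in_P:
  assumes root: "y * y + a * y + a * a = 0"
  shows "y \<in> P_pts a"
proof -
  have "y \<noteq> 0"
    using root a_nonzero by auto
  moreover have "y \<noteq> a"
  proof
    assume "y = a"
    then have "a * a + (a * a + a * a) = 0"
      using root by (simp add: add.assoc)
    then show False
      using a_nonzero by (simp add: add_self)
  qed
  ultimately show ?thesis
    by (simp add: P_pts_iff)
qed

lemma psi_eq_s_if_root:
  assumes root: "y * y + a * y + a * a = 0"
  shows "\<psi>\<^sub>a y = s\<^sub>a y"
proof -
  have y: "y \<in> P_pts a"
    using root_in_P[OF root] .
  have "(a + y) * (a + y) + a * y = (y * y + a * y + a * a) + 2 * (a * y)"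
    by (simp add: algebra_simps)
  then have "(a + y) * (a + y) = a * y"
    by (simp add: root numeral_Bit0_eq_zero add_eq_0_iff_eq)
  then show ?thesis
    using add_nonzero_if_P[OF y] by (simp add: psi_eq[OF y] s_map_def field_simps)
qed

lemma hexagon_eq_if_root:
  assumes root: "y * y + a * y + a * a = 0"
  shows "hexagon y = {y, s\<^sub>a y}"
  using psi_eq_s_if_root[OF root] psi_involution[OF root_in_P[OF root]]
  by (auto simp: hexagon_def s_involution)

lemma card_hexagon_if_root:
  assumes root: "y * y + a * y + a * a = 0"
  shows "card (hexagon y) = 2"
  using a_nonzero by (simp add: hexagon_eq_if_root[OF root] s_map_def)

lemma roots_eq:
  assumes "y * y + a * y + a * a = 0" "z * z + a * z + a * a = 0"
  shows "z = y \<or> z = s\<^sub>a y"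
proof -
  have "(z + y) * (z + y + a) + 2 * (a * a) = (z * z + a * z + a * a) + (y * y + a * y + a * a) + 2 * (y * z)"
    by (simp add: algebra_simps)
  then have "(z + y) * (z + y + a) = 0"
    using assms by (simp add: numeral_Bit0_eq_zero)
  then have "z + y = 0 \<or> z + (y + a) = 0"
    by (simp add: add.assoc)
  then show ?thesis
    by (auto simp: add_eq_0_iff_eq s_map_def add.commute)
qed

end

locale finite_char2_rotation = char2_rotation a for a :: "'a::{field,finite}"
begin

lemma card_P_pts: "card (P_pts a) + 2 = card (UNIV :: 'a set)"
proof -
  have "card {0, a} \<le> card (UNIV :: 'a set)"
    by (rule card_mono) auto
  moreover have "card (P_pts a) = card (UNIV :: 'a set) - card {0, a}"
    unfolding P_pts_def by (rule card_Diff_subset) auto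
  ultimately show ?thesis
    using a_nonzero by simp
qed

lemma rotation_lines_eq: "rotation_lines inverse inverse a = hexagon ` P_pts a"
  unfolding rotation_lines_def using rot_orbit_eq_hexagon by (rule image_cong[OF refl])

lemma sum_card_rotation_lines: "(\<Sum>L \<in> rotation_lines inverse inverse a. card L) + 2 = card (UNIV :: 'a set)"
  using sum_card_quotient_rtrancl[OF finite sym_rot_step rot_step_Image_P] card_P_pts
  by (simp add: rotation_lines_eq_quotient)

lemma rotation_lines_if_no_root:
  assumes "\<nexists>y. y * y + a * y + a * a = 0"
  shows "\<forall>L \<in> rotation_lines inverse inverse a. card L = 6"
    and "6 * card (rotation_lines inverse inverse a) + 2 = card (UNIV :: 'a set)"
proof -
  show six: "\<forall>L \<in> rotation_lines inverse inverse a. card L = 6"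
    using assms card_hexagon_if_not_root by (auto simp: rotation_lines_eq)
  show "6 * card (rotation_lines inverse inverse a) + 2 = card (UNIV :: 'a set)"
    using sum_card_rotation_lines by (simp add: six)
qed

lemma rotation_lines_if_root:
  assumes root: "y\<^sub>0 * y\<^sub>0 + a * y\<^sub>0 + a * a = 0"
  defines "lines \<equiv> rotation_lines inverse inverse a"
  shows "hexagon y\<^sub>0 \<in> lines" and "card (hexagon y\<^sub>0) = 2"
    and "\<forall>L \<in> lines - {hexagon y\<^sub>0}. card L = 6"
    and "6 * card (lines - {hexagon y\<^sub>0}) + 4 = card (UNIV :: 'a set)"
proof -
  show L0: "hexagon y\<^sub>0 \<in> lines" and "card (hexagon y\<^sub>0) = 2"
    using root_in_P[OF root] card_hexagon_if_root[OF root] by (auto simp: lines_def rotation_lines_eq)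
  have "hexagon y = hexagon y\<^sub>0" if "y \<in> P_pts a" "y * y + a * y + a * a = 0" for y
    using roots_eq[OF root that(2)] hexagon_eq_if_root[OF root] hexagon_eq_if_root[OF that(2)]
    by (auto simp: s_involution)
  then show six: "\<forall>L \<in> lines - {hexagon y\<^sub>0}. card L = 6"
    using card_hexagon_if_not_root by (auto simp: lines_def rotation_lines_eq)
  have "(\<Sum>L \<in> lines. card L) = card (hexagon y\<^sub>0) + (\<Sum>L \<in> lines - {hexagon y\<^sub>0}. card L)"
    using L0 by (simp add: sum.remove)
  then show "6 * card (lines - {hexagon y\<^sub>0}) + 4 = card (UNIV :: 'a set)"
    using sum_card_rotation_lines \<open>card (hexagon y\<^sub>0) = 2\<close> six by (simp add: lines_def)
qed

end

theorem mainTheorem14: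
  fixes m :: nat and a :: "'a::{field,finite}"
  assumes card: "card (UNIV :: 'a set) = 2 ^ m"
    and a: "a \<noteq> 0"
  shows "(odd m \<longrightarrow>
            card (rotation_lines inverse inverse a) = (2 ^ m - 2) div 6
          \<and> (\<forall>L \<in> rotation_lines inverse inverse a. card L = 6))
       \<and> (even m \<longrightarrow>
            (\<exists>L0 \<in> rotation_lines inverse inverse a. card L0 = 2
               \<and> card (rotation_lines inverse inverse a - {L0}) = (2 ^ m - 4) div 6
               \<and> (\<forall>L \<in> rotation_lines inverse inverse a - {L0}. card L = 6)))"
proof -
  interpret finite_char2_rotation a
    using char_two_if_card_power_of_two[OF card] a by unfold_locales
  show ?thesis
  proof (cases "\<exists>y. y * y + a * y + a * a = 0")
    case False
    note lines = rotation_lines_if_no_root[OF False]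
    have "odd m"
      using lines(2) power_two_mod_three[of m] card by presburger
    with lines show ?thesis
      using card by auto
  next
    case True
    then obtain y\<^sub>0 where root: "y\<^sub>0 * y\<^sub>0 + a * y\<^sub>0 + a * a = 0" ..
    note lines = rotation_lines_if_root[OF root]
    have "even m"
      using lines(4) power_two_mod_three[of m] card by presburger
    with lines show ?thesis
      using card by force
  qed
qed

end
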